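(* Let $x_0\in\mathcal H$ and $a\in\mathbb R^m_+$, and assume that $\mathcal{LP}_w(F,F(x))\neq\emptyset$ for every $x\in\mathcal L(F,F(x_0)+a)$. Then for every $x\in\mathcal L(F,F(x_0)+a)$, $$\varphi(x)=\sup_{z\in\mathcal{LP}_w(F,F(x_0)+a)}\ \min_{i=1,\dots,m}\big(f_i(x)-f_i(z)\big).$$
   Context: $\mathcal H$ is a real Hilbert space with inner product $\langle\cdot,\cdot\rangle$ and norm $\|\cdot\|$. $f_1,\dots,f_m:\mathcal H\to\mathbb R$ are convex and continuously differentiable, and $F=(f_1,\dots,f_m)^\top$. A point $x^*\in\mathcal H$ is weak Pareto optimal if there is no $x\in\mathcal H$ with $f_i(x)<f_i(x^* )$ for all $i=1,\dots,m$; $\mathcal P_w$ denotes the set of weak Pareto optimal points. For $a\in\mathbb R^m$, $\mathcal L(F,a):=\{x\in\mathcal H: f_i(x)\le a_i \text{ for all } i\}$ and $\mathcal{LP}_w(F,a):=\mathcal L(F,a)\cap\mathcal P_w$. The merit function is $\varphi(x):=\sup_{z\in\mathcal H}\min_{i=1,\dots,m}(f_i(x)-f_i(z))$. *)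

theory Defs
  imports "HOL-Analysis.Analysis"
begin

text \<open>Objectives are indexed by i < m: F = (f 0, ..., f (m-1)).\<close>

definition weak_pareto :: "nat \<Rightarrow> (nat \<Rightarrow> 'a \<Rightarrow> real) \<Rightarrow> 'a set" where
  "weak_pareto m f = {xs. \<not> (\<exists>x. \<forall>i<m. f i x < f i xs)}"

definition level_set :: "nat \<Rightarrow> (nat \<Rightarrow> 'a \<Rightarrow> real) \<Rightarrow> (nat \<Rightarrow> real) \<Rightarrow> 'a set" where
  "level_set m f a = {x. \<forall>i<m. f i x \<le> a i}"

definition level_pareto :: "nat \<Rightarrow> (nat \<Rightarrow> 'a \<Rightarrow> real) \<Rightarrow> (nat \<Rightarrow> real) \<Rightarrow> 'a set" where
  "level_pareto m f a = level_set m f a \<inter> weak_pareto m f"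

text \<open>Merit function, valued in the extended reals (the supremum may be infinite).\<close>
definition merit :: "nat \<Rightarrow> (nat \<Rightarrow> 'a \<Rightarrow> real) \<Rightarrow> 'a \<Rightarrow> ereal" where
  "merit m f x = (SUP z\<in>UNIV. ereal (Min ((\<lambda>i. f i x - f i z) ` {..<m})))"

end

theory Submission
  imports Defs
begin

text \<open>For every z, some weak Pareto point w of the level set of z (if z decreases all
  objectives relative to x) or of x (otherwise) does at least as well as z in the merit
  supremum: in the first case w dominates z, in the second case z has a negative minimal
  decrease while w has a nonnegative one.\<close>

definition min_decrease :: "nat \<Rightarrow> (nat \<Rightarrow> 'a \<Rightarrow> real) \<Rightarrow> 'a \<Rightarrow> 'a \<Rightarrow> real" where
  "min_decrease m f x z = Min ((\<lambda>i. f i x - f i z) ` {..<m})"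

lemma merit_eq_SUP_min_decrease: "merit m f x = (SUP z. ereal (min_decrease m f x z))"
  by (simp add: merit_def min_decrease_def)

lemma min_decrease_le: "i < m \<Longrightarrow> min_decrease m f x z \<le> f i x - f i z"
  unfolding min_decrease_def by (intro Min_le) auto

lemma min_decrease_ge_iff:
  "0 < m \<Longrightarrow> c \<le> min_decrease m f x z \<longleftrightarrow> (\<forall>i<m. c \<le> f i x - f i z)"
  unfolding min_decrease_def by (subst Min_ge_iff) auto

lemma min_decrease_antimono:
  assumes "0 < m" and "\<forall>i<m. f i w \<le> f i z"
  shows "min_decrease m f x z \<le> min_decrease m f x w"
  using assms min_decrease_le[of _ m f x z]
  by (force simp: min_decrease_ge_iff intro: order_trans)

lemma min_decrease_nonneg_iff:
  "0 < m \<Longrightarrow> 0 \<le> min_decrease m f x z \<longleftrightarrow> z \<in> level_set m f (\<lambda>i. f i x)"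
  by (auto simp: min_decrease_ge_iff level_set_def)

lemma level_set_trans:
  "x \<in> level_set m f c \<Longrightarrow> level_set m f (\<lambda>i. f i x) \<subseteq> level_set m f c"
  unfolding level_set_def by (auto intro: order_trans)

lemma level_pareto_trans:
  "x \<in> level_set m f c \<Longrightarrow> level_pareto m f (\<lambda>i. f i x) \<subseteq> level_pareto m f c"
  unfolding level_pareto_def by (intro Int_mono level_set_trans order_refl)

lemma level_pareto_dominates_min_decrease:
  assumes "0 < m" and x: "x \<in> level_set m f c"
    and nonempty: "\<And>y. y \<in> level_set m f c \<Longrightarrow> level_pareto m f (\<lambda>i. f i y) \<noteq> {}"
  shows "\<exists>w\<in>level_pareto m f c. min_decrease m f x z \<le> min_decrease m f x w"
proof (cases "z \<in> level_set m f (\<lambda>i. f i x)")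
  case True
  then have z: "z \<in> level_set m f c"
    using level_set_trans[OF x] by blast
  obtain w where w: "w \<in> level_pareto m f (\<lambda>i. f i z)"
    using nonempty[OF z] by blast
  then have "\<forall>i<m. f i w \<le> f i z"
    by (simp add: level_pareto_def level_set_def)
  then have "min_decrease m f x z \<le> min_decrease m f x w"
    by (rule min_decrease_antimono[OF \<open>0 < m\<close>])
  then show ?thesis
    using w level_pareto_trans[OF z] by blast
next
  case False
  obtain w where w: "w \<in> level_pareto m f (\<lambda>i. f i x)"
    using nonempty[OF x] by blast
  have "min_decrease m f x z < 0"
    using False min_decrease_nonneg_iff[OF \<open>0 < m\<close>, of f x z] by auto
  moreover have "0 \<le> min_decrease m f x w"
    using w min_decrease_nonneg_iff[OF \<open>0 < m\<close>, of f x w]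
    unfolding level_pareto_def by blast
  ultimately have "min_decrease m f x z \<le> min_decrease m f x w"
    by linarith
  then show ?thesis
    using w level_pareto_trans[OF x] by blast
qed

theorem mainTheorem1:
  fixes f :: "nat \<Rightarrow> 'a::{real_inner, complete_space} \<Rightarrow> real"
    and m :: nat and x0 :: 'a and a :: "nat \<Rightarrow> real"
  assumes m_pos: "m \<ge> 1"
    and convex: "\<And>i. i < m \<Longrightarrow> convex_on UNIV (f i)"
    and C1: "\<And>i. i < m \<Longrightarrow> \<exists>g. (\<forall>x. (f i has_derivative (\<lambda>h. g x \<bullet> h)) (at x))
                                 \<and> continuous_on UNIV g"
    and a_nonneg: "\<And>i. i < m \<Longrightarrow> a i \<ge> 0"
    and nonempty: "\<And>x. x \<in> level_set m f (\<lambda>i. f i x0 + a i) \<Longrightarrow>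
                      level_pareto m f (\<lambda>i. f i x) \<noteq> {}"
  shows "\<forall>x \<in> level_set m f (\<lambda>i. f i x0 + a i).
           merit m f x = (SUP z\<in>level_pareto m f (\<lambda>i. f i x0 + a i).
                            ereal (Min ((\<lambda>i. f i x - f i z) ` {..<m})))"
proof
  fix x assume x: "x \<in> level_set m f (\<lambda>i. f i x0 + a i)"
  have "0 < m" using m_pos by simp
  have "(SUP z. ereal (min_decrease m f x z))
      = (SUP w\<in>level_pareto m f (\<lambda>i. f i x0 + a i). ereal (min_decrease m f x w))"
  proof (rule SUP_eq)
    show "\<exists>w\<in>level_pareto m f (\<lambda>i. f i x0 + a i).
            ereal (min_decrease m f x z) \<le> ereal (min_decrease m f x w)" for z
      using level_pareto_dominates_min_decrease[OF \<open>0 < m\<close> x nonempty] by simp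
  qed auto
  then show "merit m f x = (SUP z\<in>level_pareto m f (\<lambda>i. f i x0 + a i).
                              ereal (Min ((\<lambda>i. f i x - f i z) ` {..<m})))"
    by (simp only: merit_eq_SUP_min_decrease min_decrease_def)
qed

end
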